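(* Let $\mathfrak g$ be of type $A_n$. For distinct $i,j\in I$ and every $b\in\mathcal B(\infty)$, $\widetilde f_i\widetilde f_j^\ast(b)=\widetilde f_j^\ast\widetilde f_i(b)$.
   Context: $I=\{1,\dots,n\}$. $\mathcal I=\{(s,t)\in\mathbb Z_{>0}\times I:s+t\le n+1\}$; $\mathcal B(\infty)$ is the set of $b=(b_{s,t})_{(s,t)\in\mathcal I}\in\mathbb Z_{\ge0}^{\mathcal I}$ with $b_{1,k}\ge b_{2,k-1}\ge\dots\ge b_{k,1}$ for $1\le k\le n$. Convention: $b_{s,t}=0$, $\mathbf e_{s,t}=0$ for $(s,t)\notin\mathcal I$. $\partial_{s,t}(b)=b_{s,t}-b_{s,t+1}-b_{s+1,t-1}+b_{s+1,t}$, $\partial^\ast_{s,t}(b)=b_{s-1,t}-b_{s-1,t+1}-b_{s,t-1}+b_{s,t}$. For $i\in I$, $1\le k\le n+1-i$: $\Sigma_k(b)=\sum_{s=k}^{n+1-i}\partial_{s,i}(b)$, $m_i(b)$ the smallest $k$ maximizing $\Sigma_k(b)$, $\widetilde f_i(b)=b+\mathbf e_{m_i(b),i}$. For $j\in I$, $1\le k\le j$: $\Sigma^\ast_k(b)=\sum_{t=1}^k\partial^\ast_{t,j+1-t}(b)$, $m_j^\ast(b)$ the smallest $k$ maximizing $\Sigma^\ast_k(b)$, $\widetilde f_j^\ast(b)=b+\sum_{t=1}^{m_j^\ast(b)}(\mathbf e_{t,j+1-t}-\mathbf e_{t-1,j+1-t})$. *)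

theory Defs
  imports Main
begin

type_synonym arr = "nat \<times> nat \<Rightarrow> int"

definition inI :: "nat \<Rightarrow> nat \<Rightarrow> nat \<Rightarrow> bool" where
  "inI n s t \<longleftrightarrow> 1 \<le> s \<and> 1 \<le> t \<and> t \<le> n \<and> s + t \<le> n + 1"

definition Binf :: "nat \<Rightarrow> arr set" where
  "Binf n = {b. (\<forall>s t. \<not> inI n s t \<longrightarrow> b (s,t) = 0)
              \<and> (\<forall>s t. inI n s t \<longrightarrow> 0 \<le> b (s,t))
              \<and> (\<forall>k s. 1 \<le> k \<and> k \<le> n \<and> 1 \<le> s \<and> s < k \<longrightarrow> b (s+1, k-s) \<le> b (s, k+1-s))}"

definition evec :: "nat \<Rightarrow> nat \<Rightarrow> nat \<Rightarrow> arr" where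
  "evec n s t = (\<lambda>p. if inI n s t \<and> p = (s,t) then 1 else 0)"

definition pd :: "arr \<Rightarrow> nat \<Rightarrow> nat \<Rightarrow> int" where
  "pd b s t = b (s,t) - b (s,t+1) - b (s+1,t-1) + b (s+1,t)"

definition pdstar :: "arr \<Rightarrow> nat \<Rightarrow> nat \<Rightarrow> int" where
  "pdstar b s t = b (s-1,t) - b (s-1,t+1) - b (s,t-1) + b (s,t)"

definition Sig :: "nat \<Rightarrow> nat \<Rightarrow> arr \<Rightarrow> nat \<Rightarrow> int" where
  "Sig n i b k = (\<Sum>s=k..n+1-i. pd b s i)"

definition mi :: "nat \<Rightarrow> nat \<Rightarrow> arr \<Rightarrow> nat" where
  "mi n i b = (LEAST k. k \<in> {1..n+1-i} \<and> (\<forall>k'\<in>{1..n+1-i}. Sig n i b k' \<le> Sig n i b k))"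

definition ft :: "nat \<Rightarrow> nat \<Rightarrow> arr \<Rightarrow> arr" where
  "ft n i b = (\<lambda>p. b p + evec n (mi n i b) i p)"

definition Sigstar :: "nat \<Rightarrow> arr \<Rightarrow> nat \<Rightarrow> int" where
  "Sigstar j b k = (\<Sum>t=1..k. pdstar b t (j+1-t))"

definition mstar :: "nat \<Rightarrow> arr \<Rightarrow> nat" where
  "mstar j b = (LEAST k. k \<in> {1..j} \<and> (\<forall>k'\<in>{1..j}. Sigstar j b k' \<le> Sigstar j b k))"

definition ftstar :: "nat \<Rightarrow> nat \<Rightarrow> arr \<Rightarrow> arr" where
  "ftstar n j b = (\<lambda>p. b p + (\<Sum>t=1..mstar j b. evec n t (j+1-t) p - evec n (t-1) (j+1-t) p))"

end

theory Submission
  imports Defs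
begin

text \<open>Write \<open>ft n i b = b + e(m, i)\<close> and \<open>ftstar n j b = b + \<delta>(M)\<close> with \<open>m = mi n i b\<close> and
  \<open>M = mstar j b\<close>; here \<open>\<delta>(M)\<close> is +1 on the first \<open>M\<close> cells of the antidiagonal
  \<open>s + t = j + 1\<close> and -1 on the first \<open>M - 1\<close> cells of \<open>s + t = j\<close>. Both partial sums
  telescope: for \<open>r = j - i\<close>, adding \<open>\<delta>(M)\<close> changes \<open>\<Sigma>(k)\<close> only at \<open>k = M \<in> {r, r + 1}\<close>,
  and adding \<open>e(m, i)\<close> changes \<open>\<Sigma>*(k)\<close> only at \<open>k = m \<in> {r, r + 1}\<close>; for \<open>i > j\<close> nothing
  changes. The term \<open>\<partial>(r, i)\<close> by which \<open>\<Sigma>(r)\<close> exceeds \<open>\<Sigma>(r + 1)\<close> is the term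
  \<open>\<partial>*(r + 1, i)\<close> by which \<open>\<Sigma>*(r + 1)\<close> exceeds \<open>\<Sigma>*(r)\<close>, so \<open>\<Sigma> + \<Sigma>*\<close> agrees at \<open>r\<close>
  and \<open>r + 1\<close>. A case analysis on first maximisers then shows that neither operator moves
  the other's \<open>m\<close> or \<open>M\<close>, except when \<open>m = M = r\<close>, where both move to \<open>r + 1\<close>; there
  \<open>\<delta>(r + 1) - \<delta>(r) = e(r + 1, i) - e(r, i)\<close>.\<close>

definition first_argmax :: "nat \<Rightarrow> (nat \<Rightarrow> 'a::linorder) \<Rightarrow> nat" where
  "first_argmax L f = (LEAST k. k \<in> {1..L} \<and> (\<forall>k'\<in>{1..L}. f k' \<le> f k))"

lemma first_argmax:
  assumes "1 \<le> L"
  shows first_argmax_in: "first_argmax L f \<in> {1..L}"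
    and first_argmax_max: "k \<in> {1..L} \<Longrightarrow> f k \<le> f (first_argmax L f)"
    and first_argmax_less: "k \<in> {1..L} \<Longrightarrow> k < first_argmax L f \<Longrightarrow> f k < f (first_argmax L f)"
proof -
  let ?P = "\<lambda>k. k \<in> {1..L} \<and> (\<forall>k'\<in>{1..L}. f k' \<le> f k)"
  have "Max (f ` {1..L}) \<in> f ` {1..L}"
    using assms by (intro Max_in) auto
  then obtain x where "x \<in> {1..L}" "f x = Max (f ` {1..L})" by auto
  then have "?P x" by simp
  then have P: "?P (first_argmax L f)"
    unfolding first_argmax_def by (rule LeastI)
  then show "first_argmax L f \<in> {1..L}" "k \<in> {1..L} \<Longrightarrow> f k \<le> f (first_argmax L f)"
    by auto
  assume k: "k \<in> {1..L}" "k < first_argmax L f"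
  have "\<not> ?P k"
    using k not_less_Least[of k ?P] unfolding first_argmax_def by blast
  with P k show "f k < f (first_argmax L f)" by force
qed

lemma first_argmax_eqI:
  assumes "m \<in> {1..L}" "\<And>k. k \<in> {1..L} \<Longrightarrow> f k \<le> f m"
    and "\<And>k. k \<in> {1..L} \<Longrightarrow> k < m \<Longrightarrow> f k < f m"
  shows "first_argmax L f = m"
  unfolding first_argmax_def
proof (rule Least_equality)
  fix k assume "k \<in> {1..L} \<and> (\<forall>k'\<in>{1..L}. f k' \<le> f k)"
  then show "m \<le> k" using assms by (meson leI not_less)
qed (use assms in auto)

lemma first_argmax_cong:
  "(\<And>k. k \<in> {1..L} \<Longrightarrow> f k = g k) \<Longrightarrow> first_argmax L f = first_argmax L g"
  unfolding first_argmax_def by metis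

lemma first_argmax_add_peaked:
  fixes f g :: "nat \<Rightarrow> 'a::linordered_ab_group_add"
  assumes L: "1 \<le> L" and m: "m = first_argmax L f"
    and peak: "\<And>k. k \<in> {1..L} \<Longrightarrow> g k - f k \<le> g m - f m"
  shows "first_argmax L g = m"
proof (rule first_argmax_eqI)
  show "m \<in> {1..L}" using first_argmax_in[OF L, of f] m by simp
next
  fix k assume k: "k \<in> {1..L}"
  have "f k \<le> f m" using first_argmax_max[OF L k, of f] m by simp
  from add_mono[OF this peak[OF k]] show "g k \<le> g m" by simp
next
  fix k assume k: "k \<in> {1..L}" "k < m"
  then have "f k < f m" using first_argmax_less[OF L k(1), of f] m by simp
  from add_less_le_mono[OF this peak[OF k(1)]] show "g k < g m" by simp
qed

lemma first_argmax_raise_dominated: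
  fixes f g :: "nat \<Rightarrow> int"
  assumes "1 \<le> q" "q < p" "p \<le> L" "f p < f q"
    and g: "\<And>k. k \<in> {1..L} \<Longrightarrow> g k = (if k = p then f p + 1 else f k)"
  shows "first_argmax L g = first_argmax L f"
proof -
  define m where "m = first_argmax L f"
  have L: "1 \<le> L" and q: "q \<in> {1..L}" using assms by auto
  have m: "m \<in> {1..L}" using first_argmax_in[OF L, of f] m_def by simp
  have "f q \<le> f m" using first_argmax_max[OF L q, of f] m_def by simp
  have "f q < f m" if "p < m" using first_argmax_less[OF L q, of f] assms(2) that m_def by simp
  have "first_argmax L g = m"
  proof (rule first_argmax_eqI[OF m])
    fix k assume k: "k \<in> {1..L}"
    have "f k \<le> f m" using first_argmax_max[OF L k, of f] m_def by simp
    then show "g k \<le> g m" using g[OF k] g[OF m] \<open>f q \<le> f m\<close> assms(4) by auto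
    assume "k < m"
    then have "f k < f m" using first_argmax_less[OF L k, of f] m_def by simp
    then show "g k < g m"
      using g[OF k] g[OF m] \<open>f q \<le> f m\<close> \<open>p < m \<Longrightarrow> f q < f m\<close> assms(4) \<open>k < m\<close>
      by auto
  qed
  then show ?thesis unfolding m_def .
qed

lemma first_argmax_lower_tie:
  fixes f g :: "nat \<Rightarrow> int"
  assumes m: "m = first_argmax L f" and "m + 1 \<le> L" "f (m + 1) = f m"
    and g: "\<And>k. k \<in> {1..L} \<Longrightarrow> g k = (if k = m then f m - 1 else f k)"
  shows "first_argmax L g = m + 1"
proof (rule first_argmax_eqI)
  have L: "1 \<le> L" using assms(2) by simp
  show m1: "m + 1 \<in> {1..L}" using assms(2) by simp
  fix k assume k: "k \<in> {1..L}"
  have "f k \<le> f m" using first_argmax_max[OF L k, of f] m by simp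
  then show "g k \<le> g (m + 1)" using g[OF k] g[OF m1] assms(3) by auto
  assume "k < m + 1"
  then have "k = m \<or> f k < f m" using first_argmax_less[OF L k, of f] m by (cases "k < m") auto
  then show "g k < g (m + 1)" using g[OF k] g[OF m1] assms(3) by auto
qed

text \<open>With \<open>r = j - i\<close>, this is the change of \<open>\<Sigma>(k)\<close> under \<open>ftstar\<close> with
  \<open>M = mstar j b\<close>, and equally the change of \<open>\<Sigma>*(k)\<close> under \<open>ft\<close> with \<open>M = mi n i b\<close>.\<close>
definition cross_shift :: "nat \<Rightarrow> nat \<Rightarrow> nat \<Rightarrow> int" where
  "cross_shift r M k = (if M = r \<and> k = r then -1 else if M = r + 1 \<and> k = r + 1 then 1 else 0)"

lemma first_argmax_cross_shift:
  fixes f h g :: "nat \<Rightarrow> int"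
  assumes r: "1 \<le> r" "r + 1 \<le> L" "r + 1 \<le> L'"
    and sum: "f r + h r = f (r + 1) + h (r + 1)"
    and g: "\<And>k. k \<in> {1..L} \<Longrightarrow> g k = f k + cross_shift r (first_argmax L' h) k"
  shows "first_argmax L g =
    (if first_argmax L f = r \<and> first_argmax L' h = r then r + 1 else first_argmax L f)"
proof -
  define m M where "m = first_argmax L f" and "M = first_argmax L' h"
  have L: "1 \<le> L" "1 \<le> L'"
    and rL: "r \<in> {1..L}" "r + 1 \<in> {1..L}" "r \<in> {1..L'}" "r + 1 \<in> {1..L'}"
    using r by auto
  consider (tie) "m = r" "M = r" | (lower) "m \<noteq> r" "M = r" | (raise_max) "m = r + 1" "M = r + 1"
    | (raise) "m \<noteq> r + 1" "M = r + 1" | (keep) "M \<noteq> r" "M \<noteq> r + 1"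
    by blast
  then show ?thesis
  proof cases
    case tie
    have "f (r + 1) \<le> f r" "h (r + 1) \<le> h r"
      using first_argmax_max[OF L(1) rL(2), of f] first_argmax_max[OF L(2) rL(4), of h] tie
      unfolding m_def M_def by auto
    then have "f (r + 1) = f r" using sum by linarith
    then have "first_argmax L g = r + 1"
      by (intro first_argmax_lower_tie[where f = f])
        (use g tie r(2) in \<open>auto simp: cross_shift_def m_def M_def\<close>)
    then show ?thesis using tie unfolding m_def M_def by simp
  next
    case lower
    have "first_argmax L g = m"
      by (rule first_argmax_add_peaked[OF L(1) m_def])
        (use g lower first_argmax_in[OF L(1), of f] in \<open>auto simp: cross_shift_def M_def m_def\<close>)
    then show ?thesis using lower unfolding m_def M_def by simp
  next
    case raise_max
    have "first_argmax L g = m"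
      by (rule first_argmax_add_peaked[OF L(1) m_def])
        (use g raise_max first_argmax_in[OF L(1), of f] in \<open>auto simp: cross_shift_def M_def m_def\<close>)
    then show ?thesis using raise_max unfolding m_def M_def by simp
  next
    case raise
    have "h r < h (r + 1)"
      using first_argmax_less[OF L(2) rL(3), of h] raise unfolding M_def by simp
    then have "f (r + 1) < f r" using sum by linarith
    have "first_argmax L g = m"
      unfolding m_def
      by (rule first_argmax_raise_dominated[OF r(1) _ r(2) \<open>f (r + 1) < f r\<close>])
        (use g raise in \<open>auto simp: cross_shift_def M_def\<close>)
    then show ?thesis using raise unfolding m_def M_def by simp
  next
    case keep
    have "first_argmax L g = m"
      unfolding m_def
      by (rule first_argmax_cong) (use g keep in \<open>auto simp: cross_shift_def M_def\<close>)
    then show ?thesis using keep unfolding m_def M_def by simp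
  qed
qed

lemma mi_eq_first_argmax: "mi n i b = first_argmax (n + 1 - i) (Sig n i b)"
  by (simp add: mi_def first_argmax_def)

lemma mstar_eq_first_argmax: "mstar j b = first_argmax j (Sigstar j b)"
  by (simp add: mstar_def first_argmax_def)

lemma Sig_add: "Sig n i (\<lambda>p. b p + d p) k = Sig n i b k + Sig n i d k"
  unfolding Sig_def pd_def by (simp add: sum.distrib[symmetric] algebra_simps)

lemma Sigstar_add: "Sigstar j (\<lambda>p. b p + d p) k = Sigstar j b k + Sigstar j d k"
  unfolding Sigstar_def pdstar_def by (simp add: sum.distrib[symmetric] algebra_simps)

definition ftstar_incr :: "nat \<Rightarrow> nat \<Rightarrow> nat \<Rightarrow> arr" where
  "ftstar_incr n j M p = (\<Sum>t=1..M. evec n t (j + 1 - t) p - evec n (t - 1) (j + 1 - t) p)"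

lemma ftstar_eq: "ftstar n j b = (\<lambda>p. b p + ftstar_incr n j (mstar j b) p)"
  unfolding ftstar_def ftstar_incr_def ..

lemma ftstar_incr_Suc:
  "ftstar_incr n j (Suc M) p = ftstar_incr n j M p + evec n (Suc M) (j - M) p - evec n M (j - M) p"
  unfolding ftstar_incr_def by simp

lemma ftstar_incr_eq:
  assumes "1 \<le> j" "j \<le> n" "M \<le> j"
  shows "ftstar_incr n j M (a, c) = (if a + c = j + 1 \<and> 1 \<le> a \<and> a \<le> M then 1 else 0)
                                  - (if a + c = j \<and> 1 \<le> a \<and> a < M then 1 else 0)"
proof -
  have "(\<Sum>t=1..M. evec n t (j + 1 - t) (a, c))
      = (\<Sum>t\<in>{1..M}. if t = a then (if a + c = j + 1 then 1 else 0) else 0)"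
    by (rule sum.cong) (use assms in \<open>auto simp: evec_def inI_def\<close>)
  moreover have "(\<Sum>t=1..M. evec n (t - 1) (j + 1 - t) (a, c))
      = (\<Sum>t\<in>{1..M}. if t = a + 1 then (if a + c = j \<and> 1 \<le> a then 1 else 0) else 0)"
    by (rule sum.cong) (use assms in \<open>auto simp: evec_def inI_def\<close>)
  ultimately show ?thesis
    unfolding ftstar_incr_def sum_subtractf by simp
qed

lemma Sig_ftstar_incr:
  assumes "i \<in> {1..n}" "j \<in> {1..n}" "i \<noteq> j" "M \<le> j" "1 \<le> k"
  shows "Sig n i (ftstar_incr n j M) k = (if i < j then cross_shift (j - i) M k else 0)"
proof -
  define D :: "nat \<Rightarrow> int" where "D s = (if i < j \<and> M = j - i \<and> s = j - i then -1
    else if i < j \<and> M = j - i + 1 \<and> s = j - i + 1 then 1 else 0)" for s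
  have pd: "pd (ftstar_incr n j M) s i = D s - D (Suc s)" if "1 \<le> s" for s
    unfolding pd_def D_def using assms that by (simp add: ftstar_incr_eq) presburger
  have vanish: "D s = 0" if "n + 2 - i \<le> s" for s
    using assms that unfolding D_def by auto
  have "Sig n i (ftstar_incr n j M) k = D k"
  proof (cases "k \<le> n + 2 - i")
    case True
    have "Sig n i (ftstar_incr n j M) k = (\<Sum>s=k..n+1-i. (- D (Suc s)) - (- D s))"
      unfolding Sig_def using pd assms(5) by (intro sum.cong) auto
    also have "\<dots> = D k - D (n + 2 - i)"
      using sum_Suc_diff[of k "n + 1 - i" "\<lambda>s. - D s"] True assms(1) by (simp add: Suc_diff_le)
    finally show ?thesis using vanish[of "n + 2 - i"] by simp
  next
    case False
    then show ?thesis using vanish[of k] unfolding Sig_def by simp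
  qed
  then show ?thesis unfolding D_def cross_shift_def by auto
qed

lemma Sigstar_evec:
  assumes "inI n m i" "i \<noteq> j" "k \<le> j"
  shows "Sigstar j (evec n m i) k = (if i < j then cross_shift (j - i) m k else 0)"
proof -
  define D :: "nat \<Rightarrow> int"
    where "D t = (if m + i = j + 1 \<and> t = m then 1 else if m + i = j \<and> t = m then -1 else 0)" for t
  have pdstar: "pdstar (evec n m i) t (j + 1 - t) = D t - D (t - 1)" if "1 \<le> t" "t \<le> j" for t
    using assms that unfolding pdstar_def D_def inI_def
    by (cases "t = m"; cases "t = Suc m") (auto simp: evec_def inI_def)
  have "Sigstar j (evec n m i) k = D k"
    using assms(3)
  proof (induction k)
    case 0
    then show ?case using assms(1) unfolding Sigstar_def D_def inI_def by auto
  next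
    case (Suc k)
    then show ?case using pdstar[of "Suc k"] unfolding Sigstar_def by simp
  qed
  then show ?thesis using assms(1,2) unfolding D_def cross_shift_def inI_def by auto
qed

lemma Sig_ftstar:
  assumes "i \<in> {1..n}" "j \<in> {1..n}" "i \<noteq> j" "1 \<le> k"
  shows "Sig n i (ftstar n j b) k =
    Sig n i b k + (if i < j then cross_shift (j - i) (mstar j b) k else 0)"
proof -
  have "mstar j b \<le> j"
    using first_argmax_in[of j "Sigstar j b"] assms(2) by (simp add: mstar_eq_first_argmax)
  then show ?thesis
    unfolding ftstar_eq Sig_add using Sig_ftstar_incr assms by simp
qed

lemma Sigstar_ft:
  assumes "i \<in> {1..n}" "i \<noteq> j" "k \<le> j"
  shows "Sigstar j (ft n i b) k =
    Sigstar j b k + (if i < j then cross_shift (j - i) (mi n i b) k else 0)"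
proof -
  have "1 \<le> n + 1 - i" using assms(1) by auto
  from first_argmax_in[OF this, of "Sig n i b"] have "inI n (mi n i b) i"
    using assms(1) by (auto simp: mi_eq_first_argmax inI_def)
  then show ?thesis
    unfolding ft_def Sigstar_add using Sigstar_evec assms(2,3) by simp
qed

lemma Sig_add_Sigstar_Suc:
  assumes "1 \<le> i" "i < j" "j \<le> n"
  shows "Sig n i b (j - i) + Sigstar j b (j - i) =
    Sig n i b (j - i + 1) + Sigstar j b (j - i + 1)"
proof -
  have "Sig n i b (j - i) = pd b (j - i) i + Sig n i b (j - i + 1)"
    unfolding Sig_def using assms by (subst sum.atLeast_Suc_atMost) auto
  moreover have "Sigstar j b (j - i + 1) = Sigstar j b (j - i) + pdstar b (j - i + 1) i"
    unfolding Sigstar_def using assms by simp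
  moreover have "pdstar b (j - i + 1) i = pd b (j - i) i"
    unfolding pdstar_def pd_def using assms by simp
  ultimately show ?thesis by simp
qed

lemma mi_ftstar:
  assumes "i \<in> {1..n}" "j \<in> {1..n}" "i \<noteq> j"
  shows "mi n i (ftstar n j b) =
    (if i < j \<and> mi n i b = j - i \<and> mstar j b = j - i then j - i + 1 else mi n i b)"
proof (cases "i < j")
  case True
  have "first_argmax (n + 1 - i) (Sig n i (ftstar n j b)) =
    (if first_argmax (n + 1 - i) (Sig n i b) = j - i \<and> first_argmax j (Sigstar j b) = j - i
     then j - i + 1 else first_argmax (n + 1 - i) (Sig n i b))"
    by (rule first_argmax_cross_shift)
      (use assms True Sig_add_Sigstar_Suc[of i j n b] Sig_ftstar[OF assms]
        in \<open>auto simp: mstar_eq_first_argmax\<close>)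
  then show ?thesis using True by (simp add: mi_eq_first_argmax mstar_eq_first_argmax)
next
  case False
  then show ?thesis
    unfolding mi_eq_first_argmax by (auto intro: first_argmax_cong simp: Sig_ftstar[OF assms])
qed

lemma mstar_ft:
  assumes "i \<in> {1..n}" "j \<in> {1..n}" "i \<noteq> j"
  shows "mstar j (ft n i b) =
    (if i < j \<and> mi n i b = j - i \<and> mstar j b = j - i then j - i + 1 else mstar j b)"
proof (cases "i < j")
  case True
  have "first_argmax j (Sigstar j (ft n i b)) =
    (if first_argmax j (Sigstar j b) = j - i \<and> first_argmax (n + 1 - i) (Sig n i b) = j - i
     then j - i + 1 else first_argmax j (Sigstar j b))"
    by (rule first_argmax_cross_shift)
      (use assms True Sig_add_Sigstar_Suc[of i j n b] Sigstar_ft[OF assms(1,3)]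
        in \<open>auto simp: mi_eq_first_argmax\<close>)
  then show ?thesis using True by (auto simp: mi_eq_first_argmax mstar_eq_first_argmax)
next
  case False
  then show ?thesis
    unfolding mstar_eq_first_argmax by (auto intro: first_argmax_cong simp: Sigstar_ft[OF assms(1,3)])
qed

theorem proposition6p11:
  fixes n i j :: nat and b :: arr
  assumes "i \<in> {1..n}" and "j \<in> {1..n}" and "i \<noteq> j" and "b \<in> Binf n"
  shows "ft n i (ftstar n j b) = ftstar n j (ft n i b)"
proof -
  have lhs: "ft n i (ftstar n j b) =
      (\<lambda>p. b p + ftstar_incr n j (mstar j b) p + evec n (mi n i (ftstar n j b)) i p)"
    unfolding ft_def ftstar_eq ..
  have rhs: "ftstar n j (ft n i b) =
      (\<lambda>p. b p + evec n (mi n i b) i p + ftstar_incr n j (mstar j (ft n i b)) p)"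
    unfolding ftstar_eq[of n j "ft n i b"] unfolding ft_def ..
  consider (crossing) "i < j" "mi n i b = j - i" "mstar j b = j - i"
    | (independent) "mi n i (ftstar n j b) = mi n i b" "mstar j (ft n i b) = mstar j b"
    using mi_ftstar[OF assms(1-3)] mstar_ft[OF assms(1-3)] by metis
  then show ?thesis
  proof cases
    case crossing
    then have "mi n i (ftstar n j b) = Suc (j - i)" "mstar j (ft n i b) = Suc (j - i)" "j - (j - i) = i"
      using mi_ftstar[OF assms(1-3)] mstar_ft[OF assms(1-3)] by auto
    then show ?thesis
      unfolding lhs rhs using crossing by (simp add: ftstar_incr_Suc algebra_simps)
  next
    case independent
    then show ?thesis
      unfolding lhs rhs by (simp add: algebra_simps)
  qed
qed

end
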